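(* Let $A$ and $Z$ be $n\times n$ complex matrices with $A$ positive semidefinite and $Z$ positive definite with largest eigenvalue $a$ and smallest eigenvalue $b$. Then $${\rm Sing}(AZ) \prec_w \frac{a+b}{2\sqrt{ab}}\,{\rm Eig}(AZ),$$ i.e. for each $k=1,\dots,n$, the sum of the $k$ largest singular values of $AZ$ is at most $\frac{a+b}{2\sqrt{ab}}$ times the sum of the $k$ largest eigenvalues of $AZ$.
   Context: ${\rm Sing}(X)$ is the sequence of singular values of $X$ in decreasing order counted with multiplicity; ${\rm Eig}(X)$, for $X$ with only real eigenvalues (as is $AZ$ here), is the sequence of its eigenvalues in decreasing order counted with multiplicity. For real sequences $\{a_j\}_{j=1}^n,\{b_j\}_{j=1}^n$ arranged in decreasing order, $\{a_j\}\prec_w\{b_j\}$ means $\sum_{j=1}^k a_j\le\sum_{j=1}^k b_j$ for $k=1,\dots,n$. *)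

theory Defs
  imports "Jordan_Normal_Form.Schur_Decomposition" "HOL-Computational_Algebra.Polynomial"
begin

definition hermitian_mat :: "nat \<Rightarrow> complex mat \<Rightarrow> bool" where
  "hermitian_mat n A \<longleftrightarrow> A \<in> carrier_mat n n \<and> mat_adjoint A = A"

(* positive semidefinite: Hermitian and  v^* A v \<ge> 0  for all v
   (order on complex: real and nonnegative); note (A v) \<bullet>c v = v^* A v *)
definition psd_mat :: "nat \<Rightarrow> complex mat \<Rightarrow> bool" where
  "psd_mat n A \<longleftrightarrow> hermitian_mat n A \<and>
     (\<forall>v \<in> carrier_vec n. 0 \<le> (A *\<^sub>v v) \<bullet>c v)"

definition pd_mat :: "nat \<Rightarrow> complex mat \<Rightarrow> bool" where
  "pd_mat n A \<longleftrightarrow> hermitian_mat n A \<and>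
     (\<forall>v \<in> carrier_vec n. v \<noteq> 0\<^sub>v n \<longrightarrow> 0 < (A *\<^sub>v v) \<bullet>c v)"

(* Only meaningful for X with
   real spectrum (real parts are taken). *)
definition Eig :: "complex mat \<Rightarrow> real list" where
  "Eig X = rev (sorted_list_of_multiset (image_mset Re (proots (char_poly X))))"

definition Sing :: "complex mat \<Rightarrow> real list" where
  "Sing X = map sqrt (Eig (mat_adjoint X * X))"

end

theory Submission
  imports Defs "HOL-Combinatorics.List_Permutation" "HOL-Analysis.Convex"
begin

(* Write Z = B^2 with B = Z^(1/2). Then AZ = B^(-1) (B A B) B, and diagonalizing the positive
   semidefinite matrix B A B = V diag(lam) V^* gives AZ = P diag(lam) Q^* with P = B^(-1) V,
   Q = B V = Z P and Q^* P = 1. The Kantorovich inequality |u|^2 |Zu|^2 <= F^2 (u^* Z u)^2,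
   F = (a+b)/(2 sqrt(ab)), bounds |p_l| |q_l| and the norms of the oblique projections P E Q^*
   (E a diagonal 0/1 matrix) by F.
   To compare with the singular values of X = AZ, take the Hermitian matrix G for which
   G X^* X = diag(sigma_1, ..., sigma_k, 0, ...) in the singular basis; X G is a contraction.
   Expanding tr(G X^* X) in the eigenbasis gives sum_l lam_l c_l with |c_l| <= F and
   |c_1 + ... + c_p| <= F k, and summation by parts against the decreasing lam_l yields
   sigma_1 + ... + sigma_k <= F (lam_1 + ... + lam_k). *)

section \<open>Adjoints and the complex inner product\<close>

lemma mat_adjoint_dim [simp]:
  "dim_row (mat_adjoint A) = dim_col A" "dim_col (mat_adjoint A) = dim_row A"
  unfolding mat_adjoint_def by auto

lemma mat_adjoint_carrier [simp]: "A \<in> carrier_mat n m \<Longrightarrow> mat_adjoint A \<in> carrier_mat m n"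
  unfolding carrier_mat_def by simp

lemma index_mat_adjoint [simp]:
  "i < dim_col A \<Longrightarrow> j < dim_row A \<Longrightarrow> mat_adjoint A $$ (i,j) = cnj (A $$ (j,i))"
  unfolding mat_adjoint_def by (simp add: mat_of_rows_index)

lemma mat_adjoint_mat_adjoint [simp]: "mat_adjoint (mat_adjoint (A :: complex mat)) = A"
  by (rule eq_matI) simp_all

lemma mat_adjoint_one [simp]: "mat_adjoint (1\<^sub>m n :: complex mat) = 1\<^sub>m n"
  by (rule eq_matI) simp_all

lemma mat_adjoint_zero [simp]: "mat_adjoint (0\<^sub>m n m :: complex mat) = 0\<^sub>m m n"
  by (rule eq_matI) simp_all

lemma mat_adjoint_mult:
  assumes "A \<in> carrier_mat n m" "B \<in> carrier_mat m k"
  shows "mat_adjoint (A * B :: complex mat) = mat_adjoint B * mat_adjoint A"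
proof (rule eq_matI)
  fix i j assume "i < dim_row (mat_adjoint B * mat_adjoint A)" "j < dim_col (mat_adjoint B * mat_adjoint A)"
  with assms show "mat_adjoint (A * B) $$ (i, j) = (mat_adjoint B * mat_adjoint A) $$ (i, j)"
    by (simp add: scalar_prod_def sum_conjugate row_def col_def ac_simps)
qed (use assms in auto)

lemma mat_adjoint_four_block_mat:
  assumes "A \<in> carrier_mat n1 m1" "B \<in> carrier_mat n1 m2" "C \<in> carrier_mat n2 m1" "D \<in> carrier_mat n2 m2"
  shows "mat_adjoint (four_block_mat A B C D :: complex mat) =
    four_block_mat (mat_adjoint A) (mat_adjoint C) (mat_adjoint B) (mat_adjoint D)"
proof (rule eq_matI)
  fix i j
  assume "i < dim_row (four_block_mat (mat_adjoint A) (mat_adjoint C) (mat_adjoint B) (mat_adjoint D))"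
    "j < dim_col (four_block_mat (mat_adjoint A) (mat_adjoint C) (mat_adjoint B) (mat_adjoint D))"
  with assms show "mat_adjoint (four_block_mat A B C D) $$ (i, j) =
    four_block_mat (mat_adjoint A) (mat_adjoint C) (mat_adjoint B) (mat_adjoint D) $$ (i, j)"
    by (subst index_mat_four_block) (auto dest!: carrier_matD)
qed (use assms in auto)

lemma mat_adjoint_mult_vec_carrier [simp]:
  "A \<in> carrier_mat n m \<Longrightarrow> v \<in> carrier_vec n \<Longrightarrow> mat_adjoint A *\<^sub>v v \<in> carrier_vec m"
  by (rule mult_mat_vec_carrier[OF mat_adjoint_carrier])

lemma cscalar_prod_sum: "(v :: complex vec) \<bullet>c w = (\<Sum>i<dim_vec w. v $ i * cnj (w $ i))"
  unfolding scalar_prod_def by (auto intro!: sum.cong)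

lemma cscalar_prod_mat_adjoint:
  assumes "A \<in> carrier_mat n m" "v \<in> carrier_vec m" "w \<in> carrier_vec n"
  shows "(A *\<^sub>v v) \<bullet>c (w :: complex vec) = v \<bullet>c (mat_adjoint A *\<^sub>v w)"
proof -
  have "(A *\<^sub>v v) \<bullet>c w = (\<Sum>i<n. (\<Sum>j<m. A $$ (i,j) * v $ j) * cnj (w $ i))"
    using assms by (simp add: cscalar_prod_sum scalar_prod_def mult_mat_vec_def row_def atLeast0LessThan)
  also have "\<dots> = (\<Sum>j<m. v $ j * cnj (\<Sum>i<n. cnj (A $$ (i,j)) * w $ i))"
    by (simp add: sum_distrib_left sum_distrib_right sum_conjugate ac_simps sum.swap[of _ "{..<n}"])
  also have "\<dots> = v \<bullet>c (mat_adjoint A *\<^sub>v w)"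
    using assms by (simp add: cscalar_prod_sum scalar_prod_def mult_mat_vec_def row_def atLeast0LessThan)
  finally show ?thesis .
qed

lemma cscalar_prod_smult:
  assumes "v \<in> carrier_vec n" "w \<in> carrier_vec n"
  shows "(c \<cdot>\<^sub>v v) \<bullet>c (d \<cdot>\<^sub>v (w :: complex vec)) = c * cnj d * (v \<bullet>c w)"
  using assms by (simp add: cscalar_prod_sum sum_distrib_left ac_simps)

lemma cscalar_prod_smult_left:
  "v \<in> carrier_vec n \<Longrightarrow> w \<in> carrier_vec n \<Longrightarrow> (c \<cdot>\<^sub>v v) \<bullet>c (w :: complex vec) = c * (v \<bullet>c w)"
  using cscalar_prod_smult[of v n w c 1] by simp

lemma cscalar_prod_smult_right:
  "v \<in> carrier_vec n \<Longrightarrow> w \<in> carrier_vec n \<Longrightarrow> (v :: complex vec) \<bullet>c (c \<cdot>\<^sub>v w) = cnj c * (v \<bullet>c w)"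
  using cscalar_prod_smult[of v n w 1 c] by simp

lemma index_mat_adjoint_mult_mult:
  assumes P: "P \<in> carrier_mat n k" and M: "M \<in> carrier_mat n n" and Q: "Q \<in> carrier_mat n k"
    and i: "i < k" and j: "j < k"
  shows "(mat_adjoint P * M * Q :: complex mat) $$ (i,j) = (M *\<^sub>v col Q j) \<bullet>c col P i"
proof -
  have "mat_adjoint P * M * Q = mat_adjoint P * (M * Q)"
    using P M Q by (intro assoc_mult_mat[of _ k n _ n _ k]) auto
  hence "(mat_adjoint P * M * Q) $$ (i,j) = row (mat_adjoint P) i \<bullet> col (M * Q) j"
    using P M Q i j by simp
  also have "row (mat_adjoint P) i = conjugate (col P i)"
    using P i by (intro eq_vecI) auto
  also have "col (M * Q) j = M *\<^sub>v col Q j"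
    by (rule col_mult2[OF M Q j])
  also have "conjugate (col P i) \<bullet> (M *\<^sub>v col Q j) = (M *\<^sub>v col Q j) \<bullet>c col P i"
    using P M Q j by (intro conjugate_vec_sprod_comm[symmetric, of _ n]) auto
  finally show ?thesis .
qed

lemma index_mat_adjoint_mult:
  assumes "W \<in> carrier_mat n k" "i < k" "j < k"
  shows "(mat_adjoint W * W :: complex mat) $$ (i,j) = col W j \<bullet>c col W i"
  using index_mat_adjoint_mult_mult[OF assms(1) one_carrier_mat assms] assms
  by (simp add: one_mult_mat_vec[of _ n])

definition sq_norm :: "complex vec \<Rightarrow> real" where
  "sq_norm v = Re (v \<bullet>c v)"

lemma cscalar_prod_self: "(v :: complex vec) \<bullet>c v = of_real (sq_norm v)"
  using conjugate_square_ge_0_vec[of v] by (simp add: sq_norm_def less_eq_complex_def complex_eq_iff)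

lemma sq_norm_sum: "sq_norm v = (\<Sum>i<dim_vec v. (cmod (v $ i))\<^sup>2)"
  unfolding sq_norm_def cscalar_prod_sum by (simp add: complex_mult_cnj cmod_power2 sum.distrib)

lemma sq_norm_nonneg: "sq_norm v \<ge> 0"
  unfolding sq_norm_sum by (simp add: sum_nonneg)

lemma sq_norm_pos: "v \<in> carrier_vec n \<Longrightarrow> v \<noteq> 0\<^sub>v n \<Longrightarrow> sq_norm v > 0"
  using conjugate_square_greater_0_vec[of v n] by (simp add: sq_norm_def less_complex_def)

lemma sq_norm_eq_0_iff: "v \<in> carrier_vec n \<Longrightarrow> sq_norm v = 0 \<longleftrightarrow> v = 0\<^sub>v n"
  using sq_norm_pos[of v n] by (cases "v = 0\<^sub>v n") (auto simp: sq_norm_def)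

lemma sq_norm_mult_mat_vec:
  assumes X: "X \<in> carrier_mat n n" and v: "v \<in> carrier_vec n"
  shows "sq_norm (X *\<^sub>v v) = Re (v \<bullet>c ((mat_adjoint X * X) *\<^sub>v v))"
  unfolding sq_norm_def using cscalar_prod_mat_adjoint[OF X v, of "X *\<^sub>v v"] X v
  by (simp add: assoc_mult_mat_vec[of _ n n _ n])

lemma cscalar_prod_cauchy_schwarz:
  assumes "v \<in> carrier_vec n" "w \<in> carrier_vec n"
  shows "(cmod (v \<bullet>c w))\<^sup>2 \<le> sq_norm v * sq_norm w"
proof -
  have "cmod (v \<bullet>c w) \<le> (\<Sum>i<n. cmod (v $ i) * cmod (w $ i))"
    unfolding cscalar_prod_sum using assms by (auto intro!: order.trans[OF norm_sum] simp: norm_mult)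
  hence "(cmod (v \<bullet>c w))\<^sup>2 \<le> (\<Sum>i<n. cmod (v $ i) * cmod (w $ i))\<^sup>2"
    by (simp add: power_mono)
  also have "\<dots> \<le> (\<Sum>i<n. (cmod (v $ i))\<^sup>2) * (\<Sum>i<n. (cmod (w $ i))\<^sup>2)"
    by (rule Cauchy_Schwarz_ineq_sum)
  finally show ?thesis using assms by (simp add: sq_norm_sum)
qed

section \<open>Unitary and diagonal matrices\<close>

definition unitary_mat :: "nat \<Rightarrow> complex mat \<Rightarrow> bool" where
  "unitary_mat n U \<longleftrightarrow> U \<in> carrier_mat n n \<and> mat_adjoint U * U = 1\<^sub>m n"

lemma unitary_matD:
  assumes "unitary_mat n U"
  shows "U \<in> carrier_mat n n" "mat_adjoint U * U = 1\<^sub>m n" "U * mat_adjoint U = 1\<^sub>m n"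
  using assms mat_mult_left_right_inverse[of "mat_adjoint U" n U] unfolding unitary_mat_def by auto

lemma unitary_mat_cancel:
  assumes "unitary_mat n U" "X \<in> carrier_mat n k"
  shows "mat_adjoint U * (U * X) = X" "U * (mat_adjoint U * X) = X"
  using unitary_matD[OF assms(1)] assms(2)
  by (simp_all flip: assoc_mult_mat[of _ n n _ n _ k])

lemma unitary_mat_mult:
  assumes U: "unitary_mat n U" and V: "unitary_mat n V"
  shows "unitary_mat n (U * V)"
  using unitary_matD[OF U] unitary_matD[OF V] unitary_mat_cancel[OF U]
  unfolding unitary_mat_def by (simp add: mat_adjoint_mult[of _ n n _ n] assoc_mult_mat[of _ n n _ n _ n])

lemma unitary_mat_col_cscalar_prod:
  assumes "unitary_mat n U" "i < n" "j < n"
  shows "col U i \<bullet>c col U j = (if i = j then 1 else 0)"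
  using index_mat_adjoint_mult[of U n n j i] unitary_matD[OF assms(1)] assms(2,3)
  by (cases "i = j") auto

lemma hermitian_mat_adjoint_mult_mult:
  assumes H: "hermitian_mat n H" and W: "W \<in> carrier_mat n k"
  shows "hermitian_mat k (mat_adjoint W * H * W)"
proof -
  have H': "H \<in> carrier_mat n n" "mat_adjoint H = H" using H unfolding hermitian_mat_def by auto
  have "mat_adjoint (mat_adjoint W * H * W) = mat_adjoint W * mat_adjoint (mat_adjoint W * H)"
    using H' W by (intro mat_adjoint_mult[of _ k n]) auto
  also have "mat_adjoint (mat_adjoint W * H) = H * W"
    using H' W by (simp add: mat_adjoint_mult[of _ k n _ n])
  finally show ?thesis using H' W unfolding hermitian_mat_def
    by (simp add: assoc_mult_mat[of _ k n _ n _ k] mult_carrier_mat[of _ k n _ k])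
qed

lemma psd_mat_adjoint_mult_mult:
  assumes A: "psd_mat n A" and W: "W \<in> carrier_mat n k"
  shows "psd_mat k (mat_adjoint W * A * W)"
proof -
  have A': "A \<in> carrier_mat n n" "\<And>v. v \<in> carrier_vec n \<Longrightarrow> 0 \<le> (A *\<^sub>v v) \<bullet>c v"
    using A unfolding psd_mat_def hermitian_mat_def by auto
  have "0 \<le> ((mat_adjoint W * A * W) *\<^sub>v v) \<bullet>c v" if v: "v \<in> carrier_vec k" for v
  proof -
    have "(mat_adjoint W * A * W) *\<^sub>v v = mat_adjoint W *\<^sub>v (A *\<^sub>v (W *\<^sub>v v))"
      using A' W v by (simp add: assoc_mult_mat_vec[of _ k n _ k] assoc_mult_mat_vec[of _ k n _ n]
          mult_carrier_mat[of _ k n _ n])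
    hence "((mat_adjoint W * A * W) *\<^sub>v v) \<bullet>c v = (A *\<^sub>v (W *\<^sub>v v)) \<bullet>c (W *\<^sub>v v)"
      using A' W v cscalar_prod_mat_adjoint[of "mat_adjoint W" k n "A *\<^sub>v (W *\<^sub>v v)" v] by simp
    thus ?thesis using A' W v by simp
  qed
  thus ?thesis using A W hermitian_mat_adjoint_mult_mult unfolding psd_mat_def by blast
qed

definition real_diag_mat :: "nat \<Rightarrow> (nat \<Rightarrow> real) \<Rightarrow> complex mat" where
  "real_diag_mat n f = mat_diag n (\<lambda>i. complex_of_real (f i))"

lemma real_diag_mat_carrier [simp]: "real_diag_mat n f \<in> carrier_mat n n"
  unfolding real_diag_mat_def by simp

lemma index_real_diag_mat [simp]:
  "i < n \<Longrightarrow> j < n \<Longrightarrow> real_diag_mat n f $$ (i,j) = (if i = j then complex_of_real (f i) else 0)"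
  "dim_row (real_diag_mat n f) = n" "dim_col (real_diag_mat n f) = n"
  unfolding real_diag_mat_def mat_diag_def by auto

lemma index_real_diag_mat_mult_vec [simp]:
  assumes "d \<in> carrier_vec n" "i < n"
  shows "(real_diag_mat n f *\<^sub>v d) $ i = complex_of_real (f i) * d $ i"
proof -
  have "(real_diag_mat n f *\<^sub>v d) $ i = (\<Sum>k\<in>{0..<n}. (if i = k then complex_of_real (f i) else 0) * d $ k)"
    using assms by (simp add: scalar_prod_def row_def)
  also have "\<dots> = (\<Sum>k\<in>{0..<n}. if i = k then complex_of_real (f i) * d $ k else 0)"
    by (rule sum.cong) auto
  finally show ?thesis using assms by simp
qed

lemma real_diag_mat_mult: "real_diag_mat n f * real_diag_mat n g = real_diag_mat n (\<lambda>i. f i * g i)"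
  unfolding real_diag_mat_def by simp

lemma real_diag_mat_one: "real_diag_mat n (\<lambda>_. 1) = 1\<^sub>m n"
  unfolding real_diag_mat_def by simp

lemma real_diag_mat_cong: "(\<And>i. i < n \<Longrightarrow> f i = g i) \<Longrightarrow> real_diag_mat n f = real_diag_mat n g"
  by (rule eq_matI) auto

lemma mat_adjoint_real_diag_mat [simp]: "mat_adjoint (real_diag_mat n f) = real_diag_mat n f"
  by (rule eq_matI) auto

lemma unitary_diag_carrier [simp]:
  "U \<in> carrier_mat n n \<Longrightarrow> U * real_diag_mat n f * mat_adjoint U \<in> carrier_mat n n"
  by (simp add: mult_carrier_mat[of _ n n _ n])

lemma index_unitary_diag:
  assumes U: "U \<in> carrier_mat n n" and i: "i < n" and j: "j < n"
  shows "(U * real_diag_mat n f * mat_adjoint U) $$ (i,j) =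
    (\<Sum>l<n. U $$ (i,l) * complex_of_real (f l) * cnj (U $$ (j,l)))"
proof -
  have UD: "U * real_diag_mat n f = mat n n (\<lambda>(i,j). U $$ (i,j) * complex_of_real (f j))"
    unfolding real_diag_mat_def by (rule mat_diag_mult_right[OF U])
  show ?thesis
    unfolding UD using U i j by (simp add: scalar_prod_def atLeast0LessThan)
qed

lemma hermitian_unitary_diag:
  assumes "U \<in> carrier_mat n n"
  shows "hermitian_mat n (U * real_diag_mat n f * mat_adjoint U)"
  using hermitian_mat_adjoint_mult_mult[of n "real_diag_mat n f" "mat_adjoint U" n] assms
  by (simp add: hermitian_mat_def)

lemma unitary_diag_mult:
  assumes "unitary_mat n U"
  shows "(U * real_diag_mat n f * mat_adjoint U) * (U * real_diag_mat n g * mat_adjoint U) =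
    U * real_diag_mat n (\<lambda>i. f i * g i) * mat_adjoint U"
proof -
  note U = unitary_matD[OF assms] unitary_mat_cancel[OF assms, where k = n]
  have "(U * real_diag_mat n f * mat_adjoint U) * (U * real_diag_mat n g * mat_adjoint U) =
    U * (real_diag_mat n f * real_diag_mat n g) * mat_adjoint U"
    using U by (simp add: assoc_mult_mat[of _ n n _ n _ n] mult_carrier_mat[of _ n n _ n])
  thus ?thesis by (simp only: real_diag_mat_mult)
qed

lemma unitary_diag_mult_col:
  assumes U: "unitary_mat n U" and i: "i < n"
  shows "(U * real_diag_mat n f * mat_adjoint U) *\<^sub>v col U i = complex_of_real (f i) \<cdot>\<^sub>v col U i"
proof -
  note U' = unitary_matD[OF U]
  have "(U * real_diag_mat n f * mat_adjoint U) * U = U * real_diag_mat n f"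
    using U' by (simp add: assoc_mult_mat[of _ n n _ n _ n] mult_carrier_mat[of _ n n _ n])
  moreover have "(U * real_diag_mat n f * mat_adjoint U) *\<^sub>v col U i =
    col ((U * real_diag_mat n f * mat_adjoint U) * U) i"
    using U' i by (simp add: col_mult2[of _ n n _ n])
  ultimately have "(U * real_diag_mat n f * mat_adjoint U) *\<^sub>v col U i = col (U * real_diag_mat n f) i"
    by simp
  also have "\<dots> = complex_of_real (f i) \<cdot>\<^sub>v col U i"
    unfolding real_diag_mat_def mat_diag_mult_right[OF U'(1)] using U' i by (auto simp: mult.commute)
  finally show ?thesis .
qed

lemma cscalar_prod_unitary_diag_col:
  assumes "unitary_mat n U" "i < n"
  shows "((U * real_diag_mat n f * mat_adjoint U) *\<^sub>v col U i) \<bullet>c col U i = complex_of_real (f i)"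
  using unitary_diag_mult_col[OF assms] cscalar_prod_smult_left[of "col U i" n]
    unitary_mat_col_cscalar_prod[OF assms(1,2,2)] unitary_matD[OF assms(1)] assms(2)
  by simp

lemma cscalar_prod_unitary_diag:
  assumes U: "U \<in> carrier_mat n n" and y: "y \<in> carrier_vec n"
  shows "y \<bullet>c ((U * real_diag_mat n f * mat_adjoint U) *\<^sub>v y) =
    (\<Sum>i<n. complex_of_real (f i * (cmod ((mat_adjoint U *\<^sub>v y) $ i))\<^sup>2))"
proof -
  define d where "d = mat_adjoint U *\<^sub>v y"
  have d: "d \<in> carrier_vec n" unfolding d_def using U y by simp
  have "(U * real_diag_mat n f * mat_adjoint U) *\<^sub>v y = U *\<^sub>v (real_diag_mat n f *\<^sub>v d)"
    unfolding d_def using U y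
    by (simp add: assoc_mult_mat_vec[of _ n n _ n] mult_carrier_mat[of _ n n _ n])
  also have "y \<bullet>c (U *\<^sub>v (real_diag_mat n f *\<^sub>v d)) = d \<bullet>c (real_diag_mat n f *\<^sub>v d)"
    using cscalar_prod_mat_adjoint[OF mat_adjoint_carrier[OF U] y mult_mat_vec_carrier[OF real_diag_mat_carrier d]]
    by (simp add: d_def)
  also have "\<dots> = (\<Sum>i<n. d $ i * cnj (complex_of_real (f i) * d $ i))"
    unfolding cscalar_prod_sum using d by (simp del: index_mult_mat_vec)
  also have "\<dots> = (\<Sum>i<n. complex_of_real (f i * (cmod (d $ i))\<^sup>2))"
  proof (intro sum.cong refl)
    fix i
    have "d $ i * cnj (complex_of_real (f i) * d $ i) = complex_of_real (f i) * (d $ i * cnj (d $ i))"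
      by (simp add: ac_simps)
    thus "d $ i * cnj (complex_of_real (f i) * d $ i) = complex_of_real (f i * (cmod (d $ i))\<^sup>2)"
      by (simp only: of_real_mult complex_norm_square)
  qed
  finally show ?thesis unfolding d_def .
qed

lemma sq_norm_unitary:
  assumes U: "unitary_mat n U" and y: "y \<in> carrier_vec n"
  shows "sq_norm y = (\<Sum>i<n. (cmod ((mat_adjoint U *\<^sub>v y) $ i))\<^sup>2)"
proof -
  have "U * real_diag_mat n (\<lambda>_. 1) * mat_adjoint U = 1\<^sub>m n"
    using unitary_matD[OF U] by (simp add: real_diag_mat_one)
  thus ?thesis
    using cscalar_prod_unitary_diag[OF unitary_matD(1)[OF U] y, of "\<lambda>_. 1"] y
    by (simp add: sq_norm_def Re_sum)
qed

lemma unitary_diag_nonneg_of_psd: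
  assumes "psd_mat n (U * real_diag_mat n f * mat_adjoint U)" "unitary_mat n U" "i < n"
  shows "0 \<le> f i"
proof -
  have "0 \<le> ((U * real_diag_mat n f * mat_adjoint U) *\<^sub>v col U i) \<bullet>c col U i"
    using assms(1) unitary_matD(1)[OF assms(2)] assms(3) unfolding psd_mat_def by simp
  thus ?thesis unfolding cscalar_prod_unitary_diag_col[OF assms(2,3)] by (simp add: less_eq_complex_def)
qed

lemma unitary_diag_pos_of_pd:
  assumes "pd_mat n (U * real_diag_mat n f * mat_adjoint U)" "unitary_mat n U" "i < n"
  shows "0 < f i"
proof -
  have "col U i \<noteq> 0\<^sub>v n"
    using unitary_mat_col_cscalar_prod[OF assms(2,3,3)] unitary_matD(1)[OF assms(2)] assms(3) by auto
  thus ?thesis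
    using assms cscalar_prod_unitary_diag_col[OF assms(2,3), of f] unitary_matD(1)[OF assms(2)]
    unfolding pd_mat_def by (auto simp: less_complex_def)
qed

section \<open>The spectral theorem\<close>

definition vec_normalize :: "complex vec \<Rightarrow> complex vec" where
  "vec_normalize w = complex_of_real (1 / sqrt (sq_norm w)) \<cdot>\<^sub>v w"

lemma vec_normalize_carrier [simp]: "w \<in> carrier_vec n \<Longrightarrow> vec_normalize w \<in> carrier_vec n"
  unfolding vec_normalize_def by simp

lemma cscalar_prod_vec_normalize:
  assumes "v \<in> carrier_vec n" "w \<in> carrier_vec n"
  shows "vec_normalize v \<bullet>c vec_normalize w = (v \<bullet>c w) / (sqrt (sq_norm v) * sqrt (sq_norm w))"
  unfolding vec_normalize_def by (simp add: cscalar_prod_smult[OF assms] field_simps)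

lemma vec_normalize_unit:
  assumes "w \<in> carrier_vec n" "w \<noteq> 0\<^sub>v n"
  shows "vec_normalize w \<bullet>c vec_normalize w = 1"
proof -
  have "vec_normalize w \<bullet>c vec_normalize w =
      complex_of_real (sq_norm w) / complex_of_real (sqrt (sq_norm w) * sqrt (sq_norm w))"
    by (simp only: cscalar_prod_vec_normalize[OF assms(1,1)] cscalar_prod_self[of w])
  thus ?thesis using sq_norm_pos[OF assms] by simp
qed

lemma unitary_mat_of_corthogonal:
  assumes ws: "set ws \<subseteq> carrier_vec n" "corthogonal ws" "length ws = n"
  shows "unitary_mat n (mat_of_cols n (map vec_normalize ws))"
proof -
  define W where "W = mat_of_cols n (map vec_normalize ws)"
  have W: "W \<in> carrier_mat n n" unfolding W_def using ws by auto
  have wsc: "ws ! i \<in> carrier_vec n" if "i < n" for i using ws that by auto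
  have colW: "col W i = vec_normalize (ws ! i)" if "i < n" for i
    unfolding W_def using ws wsc that by (subst col_mat_of_cols) auto
  have ws0: "ws ! i \<noteq> 0\<^sub>v n" if "i < n" for i
    using ws(2,3) wsc that unfolding corthogonal_def by (metis conjugate_square_eq_0_vec)
  have "mat_adjoint W * W = 1\<^sub>m n"
  proof (rule eq_matI)
    fix i j assume "i < dim_row (1\<^sub>m n)" "j < dim_col (1\<^sub>m n)"
    hence i: "i < n" and j: "j < n" by auto
    have "(mat_adjoint W * W) $$ (i, j) = vec_normalize (ws ! j) \<bullet>c vec_normalize (ws ! i)"
      using index_mat_adjoint_mult[OF W i j] colW[OF i] colW[OF j] by simp
    also have "\<dots> = 1\<^sub>m n $$ (i, j)"
    proof (cases "i = j")
      case False
      hence "ws ! j \<bullet>c ws ! i = 0" using ws(2,3) i j unfolding corthogonal_def by auto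
      thus ?thesis using False i j by (simp add: cscalar_prod_vec_normalize[OF wsc[OF j] wsc[OF i]])
    qed (use i vec_normalize_unit[OF wsc[OF j] ws0[OF j]] in simp)
    finally show "(mat_adjoint W * W) $$ (i, j) = 1\<^sub>m n $$ (i, j)" .
  qed (use W in auto)
  thus ?thesis using W unfolding unitary_mat_def W_def by simp
qed

lemma unitary_mat_first_col:
  assumes v: "v \<in> carrier_vec n" and v0: "v \<noteq> 0\<^sub>v n"
  obtains W where "unitary_mat n W" "col W 0 = vec_normalize v"
proof -
  interpret cof_vec_space n "TYPE(complex)" .
  define b where "b = basis_completion v"
  from basis_completion[OF v v0, folded b_def]
  have dist_b: "distinct b" and indep: "\<not> lin_dep (set b)" and b: "set b \<subseteq> carrier_vec n"
    and hdb: "hd b = v" and len_b: "length b = n" by auto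
  have n: "n \<noteq> 0" using v0 v by (cases n) auto
  from hdb len_b n obtain vs where bv: "b = v # vs" by (cases b, auto)
  define ws where "ws = gram_schmidt n b"
  from gram_schmidt_result[OF b dist_b indep refl, folded ws_def]
  have ws: "set ws \<subseteq> carrier_vec n" "corthogonal ws" "length ws = n"
    by (auto simp: len_b)
  from gram_schmidt_hd[OF v, of vs, folded bv] have "hd ws = v" unfolding ws_def .
  hence "col (mat_of_cols n (map vec_normalize ws)) 0 = vec_normalize v"
    using ws n by (cases ws) (auto simp: col_mat_of_cols)
  thus ?thesis using that unitary_mat_of_corthogonal[OF ws] by blast
qed

lemma unitary_mat_conj:
  assumes "unitary_mat n U" "H \<in> carrier_mat n n"
  shows "U * (mat_adjoint U * H * U) * mat_adjoint U = H"
  using unitary_matD[OF assms(1)] unitary_mat_cancel[OF assms(1)] assms(2)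
  by (simp add: assoc_mult_mat[of _ n n _ n _ n] mult_carrier_mat[of _ n n _ n])

lemma unitary_mat_four_block:
  assumes "unitary_mat m U"
  shows "unitary_mat (Suc m) (four_block_mat (1\<^sub>m 1) (0\<^sub>m 1 m) (0\<^sub>m m 1) U)"
proof -
  note U = unitary_matD[OF assms]
  have "mat_adjoint (four_block_mat (1\<^sub>m 1) (0\<^sub>m 1 m) (0\<^sub>m m 1) U) * four_block_mat (1\<^sub>m 1) (0\<^sub>m 1 m) (0\<^sub>m m 1) U
    = four_block_mat (1\<^sub>m 1) (0\<^sub>m 1 m) (0\<^sub>m m 1) (mat_adjoint U) * four_block_mat (1\<^sub>m 1) (0\<^sub>m 1 m) (0\<^sub>m m 1) U"
    using U by (simp add: mat_adjoint_four_block_mat[of _ 1 1 _ m _ m])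
  also have "\<dots> = 1\<^sub>m (Suc m)"
    using U by (subst mult_four_block_mat[of _ 1 1 _ m _ m _ _ 1 _ m]) auto
  finally show ?thesis using U unfolding unitary_mat_def
    by (simp add: four_block_carrier_mat[of _ 1 1 _ m m, simplified])
qed

lemma hermitian_mat_first_col_block:
  assumes K: "hermitian_mat (Suc m) K" and col0: "\<And>i. 0 < i \<Longrightarrow> i < Suc m \<Longrightarrow> K $$ (i, 0) = 0"
  obtains K1 K3 where "K1 \<in> carrier_mat 1 1" "hermitian_mat m K3"
    "K = four_block_mat K1 (0\<^sub>m 1 m) (0\<^sub>m m 1) K3"
proof -
  have K': "K \<in> carrier_mat (Suc m) (Suc m)" "mat_adjoint K = K" using K unfolding hermitian_mat_def by auto
  have conj: "K $$ (i, j) = cnj (K $$ (j, i))" if "i < Suc m" "j < Suc m" for i j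
    using arg_cong[OF K'(2), of "\<lambda>M. M $$ (i, j)"] K'(1) that by simp
  obtain K1 K2 K0 K3 where sb: "split_block K 1 1 = (K1, K2, K0, K3)"
    by (cases "split_block K 1 1") auto
  from split_block[OF sb, of m m] K'
  have K1: "K1 \<in> carrier_mat 1 1" and K2: "K2 \<in> carrier_mat 1 m" and K0: "K0 \<in> carrier_mat m 1"
    and K3: "K3 \<in> carrier_mat m m" and Kb: "K = four_block_mat K1 K2 K0 K3"
    by auto
  have "K2 = 0\<^sub>m 1 m"
  proof (rule eq_matI)
    fix i j assume "i < dim_row (0\<^sub>m 1 m :: complex mat)" "j < dim_col (0\<^sub>m 1 m :: complex mat)"
    hence ij: "i = 0" "j < m" by auto
    have "K $$ (0, Suc j) = K2 $$ (0, j)" unfolding Kb using K1 K2 K3 ij by simp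
    thus "K2 $$ (i, j) = 0\<^sub>m 1 m $$ (i, j)" using conj[of 0 "Suc j"] col0[of "Suc j"] ij by simp
  qed (use K2 in auto)
  moreover have "K0 = 0\<^sub>m m 1"
  proof (rule eq_matI)
    fix i j assume "i < dim_row (0\<^sub>m m 1 :: complex mat)" "j < dim_col (0\<^sub>m m 1 :: complex mat)"
    hence ij: "j = 0" "i < m" by auto
    have "K $$ (Suc i, 0) = K0 $$ (i, 0)" unfolding Kb using K1 K0 K3 ij by simp
    thus "K0 $$ (i, j) = 0\<^sub>m m 1 $$ (i, j)" using col0[of "Suc i"] ij by simp
  qed (use K0 in auto)
  moreover have "hermitian_mat m K3"
    unfolding hermitian_mat_def
  proof (intro conjI K3 eq_matI)
    fix i j assume "i < dim_row K3" "j < dim_col K3"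
    hence ij: "i < m" "j < m" using K3 by auto
    have "K3 $$ (i, j) = K $$ (Suc i, Suc j)" "K3 $$ (j, i) = K $$ (Suc j, Suc i)"
      using ij K1 K3 unfolding Kb by simp_all
    thus "mat_adjoint K3 $$ (i, j) = K3 $$ (i, j)"
      using K3 ij conj[of "Suc i" "Suc j"] by simp
  qed (use K3 in auto)
  ultimately show ?thesis using that[OF K1] Kb by simp
qed

lemma hermitian_deflation:
  assumes "hermitian_mat (Suc m) H"
  obtains W K1 K where "unitary_mat (Suc m) W" "K1 \<in> carrier_mat 1 1" "hermitian_mat m K"
    "mat_adjoint W * H * W = four_block_mat K1 (0\<^sub>m 1 m) (0\<^sub>m m 1) K"
proof -
  define n where "n = Suc m"
  have H: "H \<in> carrier_mat n n" using assms unfolding n_def hermitian_mat_def by auto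
  have "\<not> constant (poly (char_poly H))"
    using degree_monic_char_poly[OF H] unfolding constant_degree n_def by simp
  then obtain e where "poly (char_poly H) e = 0" using fundamental_theorem_of_algebra by blast
  hence "eigenvector H (find_eigenvector H e) e"
    using eigenvalue_root_char_poly[OF H] find_eigenvector[OF H] by simp
  then obtain v where v: "v \<in> carrier_vec n" "v \<noteq> 0\<^sub>v n" "H *\<^sub>v v = e \<cdot>\<^sub>v v"
    unfolding eigenvector_def using H by auto
  obtain W where W: "unitary_mat n W" and W0: "col W 0 = vec_normalize v"
    using unitary_mat_first_col[OF v(1,2)] by blast
  note W' = unitary_matD[OF W]
  have HW0: "H *\<^sub>v col W 0 = e \<cdot>\<^sub>v col W 0"
    unfolding W0 vec_normalize_def using mult_mat_vec[OF H v(1)] v(3)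
    by (auto simp: smult_smult_assoc mult.commute)
  have "(mat_adjoint W * H * W) $$ (i, 0) = 0" if i: "0 < i" "i < n" for i
  proof -
    have "(mat_adjoint W * H * W) $$ (i, 0) = (H *\<^sub>v col W 0) \<bullet>c col W i"
      using index_mat_adjoint_mult_mult[OF W'(1) H W'(1) i(2)] i by simp
    also have "\<dots> = e * (col W 0 \<bullet>c col W i)"
      unfolding HW0 using W'(1) i by (simp add: cscalar_prod_smult_left[of _ n])
    finally show ?thesis using unitary_mat_col_cscalar_prod[OF W _ i(2), of 0] i by simp
  qed
  moreover have "hermitian_mat n (mat_adjoint W * H * W)"
    by (rule hermitian_mat_adjoint_mult_mult[OF _ W'(1)]) (use assms n_def in simp)
  ultimately show ?thesis
    using hermitian_mat_first_col_block that W unfolding n_def by metis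
qed

theorem hermitian_unitary_diagonalization:
  assumes "hermitian_mat n H"
  obtains U D where "unitary_mat n U" "D \<in> carrier_mat n n" "diagonal_mat D"
    "H = U * D * mat_adjoint U"
  using assms
proof (induction n arbitrary: H thesis)
  case 0
  thus ?case unfolding hermitian_mat_def unitary_mat_def diagonal_mat_def by fastforce
next
  case (Suc m H)
  obtain W K1 K where W: "unitary_mat (Suc m) W" and K1: "K1 \<in> carrier_mat 1 1"
    and K: "hermitian_mat m K" and WHW: "mat_adjoint W * H * W = four_block_mat K1 (0\<^sub>m 1 m) (0\<^sub>m m 1) K"
    using hermitian_deflation[OF Suc.prems(2)] by blast
  obtain U' D' where U': "unitary_mat m U'" and D': "D' \<in> carrier_mat m m"
    and dD': "diagonal_mat D'" and KU': "K = U' * D' * mat_adjoint U'"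
    using Suc.IH[OF _ K] by blast
  define F where "F = four_block_mat (1\<^sub>m 1) (0\<^sub>m 1 m) (0\<^sub>m m 1) U'"
  define D where "D = four_block_mat K1 (0\<^sub>m 1 m) (0\<^sub>m m 1) D'"
  note U'' = unitary_matD[OF U']
  have F: "unitary_mat (Suc m) F" unfolding F_def by (rule unitary_mat_four_block[OF U'])
  have D: "D \<in> carrier_mat (Suc m) (Suc m)"
    unfolding D_def using K1 D' by (simp add: four_block_carrier_mat[of _ 1 1 _ m m, simplified])
  have FDF: "F * D * mat_adjoint F = four_block_mat K1 (0\<^sub>m 1 m) (0\<^sub>m m 1) K"
  proof -
    have "F * D = four_block_mat K1 (0\<^sub>m 1 m) (0\<^sub>m m 1) (U' * D')"
      unfolding F_def D_def using U'' D' K1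
      by (subst mult_four_block_mat[of _ 1 1 _ m _ m _ _ 1 _ m]) auto
    thus ?thesis
      unfolding F_def KU' using U'' D' K1
      by (simp add: mat_adjoint_four_block_mat[of _ 1 1 _ m _ m])
        (subst mult_four_block_mat[of _ 1 1 _ m _ m _ _ 1 _ m], auto)
  qed
  have H: "H \<in> carrier_mat (Suc m) (Suc m)" using Suc.prems(2) unfolding hermitian_mat_def by simp
  note W' = unitary_matD[OF W] and F' = unitary_matD[OF F]
  have "H = W * (F * D * mat_adjoint F) * mat_adjoint W"
    using unitary_mat_conj[OF W H] unfolding WHW FDF by simp
  also have "\<dots> = (W * F) * D * mat_adjoint (W * F)"
    using W' F' D by (simp add: mat_adjoint_mult[of _ "Suc m" "Suc m" _ "Suc m"]
        assoc_mult_mat[of _ "Suc m" "Suc m" _ "Suc m" _ "Suc m"] mult_carrier_mat[of _ "Suc m" "Suc m" _ "Suc m"])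
  finally have "H = (W * F) * D * mat_adjoint (W * F)" .
  moreover have "diagonal_mat D"
    using K1 D' dD' unfolding diagonal_mat_def D_def by auto
  ultimately show ?case using Suc.prems(1) unitary_mat_mult[OF W F] D by blast
qed

lemma unitary_diag_permute:
  assumes U: "unitary_mat n U" and \<sigma>: "bij_betw \<sigma> {..<n} {..<n}"
  defines "U' \<equiv> mat n n (\<lambda>(i,j). U $$ (i, \<sigma> j))"
  shows "unitary_mat n U'"
    and "U * real_diag_mat n f * mat_adjoint U = U' * real_diag_mat n (f \<circ> \<sigma>) * mat_adjoint U'"
proof -
  note U'' = unitary_matD[OF U]
  have \<sigma>n: "\<sigma> i < n" if "i < n" for i using \<sigma> that by (auto simp: bij_betw_def)
  have \<sigma>inj: "\<sigma> i = \<sigma> j \<longleftrightarrow> i = j" if "i < n" "j < n" for i j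
    using \<sigma> that by (auto simp: bij_betw_def inj_on_def)
  have U': "U' \<in> carrier_mat n n" unfolding U'_def by simp
  have colU': "col U' j = col U (\<sigma> j)" if "j < n" for j
    unfolding U'_def using U'' \<sigma>n that by (intro eq_vecI) auto
  have "mat_adjoint U' * U' = 1\<^sub>m n"
  proof (rule eq_matI)
    fix i j assume "i < dim_row (1\<^sub>m n)" "j < dim_col (1\<^sub>m n)"
    hence ij: "i < n" "j < n" by auto
    have "(mat_adjoint U' * U') $$ (i,j) = col U (\<sigma> j) \<bullet>c col U (\<sigma> i)"
      using index_mat_adjoint_mult[OF U' ij] colU' ij by simp
    thus "(mat_adjoint U' * U') $$ (i,j) = 1\<^sub>m n $$ (i,j)"
      using unitary_mat_col_cscalar_prod[OF U \<sigma>n \<sigma>n] ij \<sigma>inj by auto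
  qed (use U' in auto)
  thus "unitary_mat n U'" using U' unfolding unitary_mat_def by simp
  show "U * real_diag_mat n f * mat_adjoint U = U' * real_diag_mat n (f \<circ> \<sigma>) * mat_adjoint U'"
  proof (rule eq_matI)
    fix i j assume "i < dim_row (U' * real_diag_mat n (f \<circ> \<sigma>) * mat_adjoint U')"
      "j < dim_col (U' * real_diag_mat n (f \<circ> \<sigma>) * mat_adjoint U')"
    hence ij: "i < n" "j < n" using U' by auto
    have "(U' * real_diag_mat n (f \<circ> \<sigma>) * mat_adjoint U') $$ (i,j) =
      (\<Sum>l<n. (\<lambda>k. U $$ (i,k) * complex_of_real (f k) * cnj (U $$ (j,k))) (\<sigma> l))"
      unfolding index_unitary_diag[OF U' ij] unfolding U'_def using ij \<sigma>n by (intro sum.cong) auto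
    also have "\<dots> = (U * real_diag_mat n f * mat_adjoint U) $$ (i,j)"
      unfolding index_unitary_diag[OF U''(1) ij] by (rule sum.reindex_bij_betw[OF \<sigma>])
    finally show "(U * real_diag_mat n f * mat_adjoint U) $$ (i,j) =
      (U' * real_diag_mat n (f \<circ> \<sigma>) * mat_adjoint U') $$ (i,j)" by simp
  qed (use U'' U' in auto)
qed

lemma hermitian_diagonal_mat:
  assumes "hermitian_mat n D" "diagonal_mat D"
  shows "D = real_diag_mat n (\<lambda>i. Re (D $$ (i,i)))"
proof (rule eq_matI)
  have D: "D \<in> carrier_mat n n" "mat_adjoint D = D" using assms(1) unfolding hermitian_mat_def by auto
  fix i j assume "i < dim_row (real_diag_mat n (\<lambda>i. Re (D $$ (i,i))))"
    "j < dim_col (real_diag_mat n (\<lambda>i. Re (D $$ (i,i))))"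
  hence ij: "i < n" "j < n" by auto
  have "cnj (D $$ (i,i)) = D $$ (i,i)"
    using arg_cong[OF D(2), of "\<lambda>M. M $$ (i,i)"] D(1) ij by simp
  hence "D $$ (i,i) = complex_of_real (Re (D $$ (i,i)))" by (simp add: complex_eq_iff)
  thus "D $$ (i, j) = real_diag_mat n (\<lambda>i. Re (D $$ (i,i))) $$ (i, j)"
    using assms(2) D ij unfolding diagonal_mat_def by auto
qed (use assms in \<open>auto simp: hermitian_mat_def\<close>)

theorem hermitian_spectral_decomposition:
  assumes H: "hermitian_mat n H"
  obtains U ls where "unitary_mat n U" "length ls = n" "sorted (rev ls)"
    "H = U * real_diag_mat n ((!) ls) * mat_adjoint U"
proof -
  obtain U D where U: "unitary_mat n U" and D: "D \<in> carrier_mat n n" and dD: "diagonal_mat D"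
    and HD: "H = U * D * mat_adjoint U"
    using hermitian_unitary_diagonalization[OF H] by blast
  note U' = unitary_matD[OF U]
  have "D = mat_adjoint U * H * U"
    unfolding HD using U' D unitary_mat_cancel[OF U]
    by (simp add: assoc_mult_mat[of _ n n _ n _ n] mult_carrier_mat[of _ n n _ n])
  hence "hermitian_mat n D" using hermitian_mat_adjoint_mult_mult[OF H U'(1)] by simp
  define ds where "ds = map (\<lambda>i. Re (D $$ (i,i))) [0..<n]"
  have HU: "H = U * real_diag_mat n ((!) ds) * mat_adjoint U"
    unfolding HD ds_def by (subst hermitian_diagonal_mat[OF \<open>hermitian_mat n D\<close> dD])
      (intro arg_cong2[where f = "(*)"] refl real_diag_mat_cong, simp)
  define ls where "ls = rev (sort ds)"
  have len: "length ls = n" "length ds = n" unfolding ls_def ds_def by auto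
  have "mset ls = mset ds" unfolding ls_def by simp
  from permutation_Ex_bij[OF this] obtain \<sigma> where \<sigma>: "bij_betw \<sigma> {..<n} {..<n}"
    and ls: "\<And>i. i < n \<Longrightarrow> ls ! i = ds ! \<sigma> i" using len by auto
  have ls_ds: "real_diag_mat n ((!) ds \<circ> \<sigma>) = real_diag_mat n ((!) ls)"
    using ls by (intro real_diag_mat_cong) simp
  define U' where "U' = mat n n (\<lambda>(i,j). U $$ (i, \<sigma> j))"
  have "H = U' * real_diag_mat n ((!) ls) * mat_adjoint U'"
    unfolding HU unitary_diag_permute(2)[OF U \<sigma>] U'_def ls_ds ..
  moreover have "sorted (rev ls)" unfolding ls_def by simp
  ultimately show ?thesis
    using that unitary_diag_permute(1)[OF U \<sigma>] len(1) unfolding U'_def by blast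
qed

lemma proots_prod_linear: "proots (\<Prod>a\<leftarrow>xs. [:- a, 1:]) = mset (xs :: complex list)"
proof (induction xs)
  case (Cons a xs)
  have "(\<Prod>a\<leftarrow>xs. [:- a, 1:]) \<noteq> 0" by (auto simp: prod_list_zero_iff)
  hence "proots ([:- a, 1:] * (\<Prod>a\<leftarrow>xs. [:- a, 1:])) = {#a#} + mset xs"
    using proots_linear_factor[of "-a"] by (subst proots_mult) (simp_all add: Cons.IH)
  thus ?case by simp
qed simp

lemma Eig_diagonalizable:
  assumes X: "X \<in> carrier_mat n n" and P: "P \<in> carrier_mat n n" and Q: "Q \<in> carrier_mat n n"
    and PQ: "P * Q = 1\<^sub>m n" and QP: "Q * P = 1\<^sub>m n" and XP: "X = P * real_diag_mat n ((!) ls) * Q"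
    and len: "length ls = n" and srt: "sorted (rev ls)"
  shows "Eig X = ls"
proof -
  have "similar_mat X (real_diag_mat n ((!) ls))" unfolding similar_mat_def similar_mat_wit_def
    using X P Q PQ QP XP by (intro exI[of _ P] exI[of _ Q]) auto
  hence "char_poly X = char_poly (real_diag_mat n ((!) ls))" by (rule char_poly_similar)
  also have "\<dots> = (\<Prod>a\<leftarrow>diag_mat (real_diag_mat n ((!) ls)). [:- a, 1:])"
    by (rule char_poly_upper_triangular[of _ n]) (auto simp: upper_triangular_def)
  also have "diag_mat (real_diag_mat n ((!) ls)) = map complex_of_real ls"
    using len by (intro nth_equalityI) (auto simp: diag_mat_def)
  finally have "char_poly X = (\<Prod>a\<leftarrow>map complex_of_real ls. [:- a, 1:])" .
  hence "image_mset Re (proots (char_poly X)) = mset ls"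
    by (simp only: proots_prod_linear) (simp add: multiset.map_comp o_def)
  hence "Eig X = rev (sort ls)" unfolding Eig_def by simp
  also have "sort ls = rev ls" by (rule properties_for_sort) (simp_all add: srt)
  finally show ?thesis by simp
qed

lemma Eig_unitary_diag:
  assumes "unitary_mat n U" "length ls = n" "sorted (rev ls)"
  shows "Eig (U * real_diag_mat n ((!) ls) * mat_adjoint U) = ls"
  using unitary_matD[OF assms(1)] assms(2,3)
  by (intro Eig_diagonalizable[of _ n U "mat_adjoint U"]) auto

lemma pd_mat_spectral_decomposition:
  assumes "pd_mat n Z"
  obtains U zs where "unitary_mat n U" "length zs = n" "sorted (rev zs)" "\<And>i. i < n \<Longrightarrow> 0 < zs ! i"
    "Z = U * real_diag_mat n ((!) zs) * mat_adjoint U" "Eig Z = zs"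
proof -
  obtain U zs where U: "unitary_mat n U" and zs: "length zs = n" "sorted (rev zs)"
    and Z: "Z = U * real_diag_mat n ((!) zs) * mat_adjoint U"
    using hermitian_spectral_decomposition assms unfolding pd_mat_def by blast
  show ?thesis
    using that[OF U zs _ Z] unitary_diag_pos_of_pd[OF assms[unfolded Z] U] Eig_unitary_diag[OF U zs] Z
    by blast
qed

lemma pd_mat_sqrt:
  assumes "pd_mat n Z"
  obtains B B' where "hermitian_mat n B" "B' \<in> carrier_mat n n" "B * B = Z" "B * B' = 1\<^sub>m n" "B' * B = 1\<^sub>m n"
proof -
  obtain U zs where U: "unitary_mat n U" and zs: "\<And>i. i < n \<Longrightarrow> 0 < zs ! i"
    and Z: "Z = U * real_diag_mat n ((!) zs) * mat_adjoint U"
    using pd_mat_spectral_decomposition[OF assms] by metis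
  note U' = unitary_matD[OF U]
  define B where "B = U * real_diag_mat n (\<lambda>i. sqrt (zs ! i)) * mat_adjoint U"
  define B' where "B' = U * real_diag_mat n (\<lambda>i. 1 / sqrt (zs ! i)) * mat_adjoint U"
  show ?thesis
  proof (rule that)
    show "hermitian_mat n B" unfolding B_def by (rule hermitian_unitary_diag[OF U'(1)])
    show "B' \<in> carrier_mat n n" unfolding B'_def using U'(1) by simp
    show "B * B = Z"
      unfolding B_def Z unitary_diag_mult[OF U] using zs
      by (intro arg_cong2[where f = "(*)"] refl real_diag_mat_cong) (simp add: less_imp_le)
    have "real_diag_mat n (\<lambda>i. sqrt (zs ! i) * (1 / sqrt (zs ! i))) = real_diag_mat n (\<lambda>_. 1)"
      "real_diag_mat n (\<lambda>i. 1 / sqrt (zs ! i) * sqrt (zs ! i)) = real_diag_mat n (\<lambda>_. 1)"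
      by (auto intro!: real_diag_mat_cong dest!: zs)
    thus "B * B' = 1\<^sub>m n" "B' * B = 1\<^sub>m n"
      unfolding B_def B'_def unitary_diag_mult[OF U] using U' by (simp_all add: real_diag_mat_one)
  qed
qed

lemma psd_mult_pd_eigen_factorization:
  assumes A: "psd_mat n A" and Z: "pd_mat n Z"
  obtains P Q lam where "P \<in> carrier_mat n n" "Q \<in> carrier_mat n n"
    "mat_adjoint Q * P = 1\<^sub>m n" "P * mat_adjoint Q = 1\<^sub>m n" "Z * P = Q"
    "length lam = n" "sorted (rev lam)" "\<And>l. l < n \<Longrightarrow> 0 \<le> lam ! l"
    "A * Z = P * real_diag_mat n ((!) lam) * mat_adjoint Q"
proof -
  obtain B B' where B: "hermitian_mat n B" and B': "B' \<in> carrier_mat n n"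
    and BB: "B * B = Z" and BB': "B * B' = 1\<^sub>m n" "B' * B = 1\<^sub>m n"
    using pd_mat_sqrt[OF Z] by blast
  have Bc: "B \<in> carrier_mat n n" "mat_adjoint B = B" using B unfolding hermitian_mat_def by auto
  have Ac: "A \<in> carrier_mat n n" using A unfolding psd_mat_def hermitian_mat_def by auto
  have "psd_mat n (B * A * B)"
    using psd_mat_adjoint_mult_mult[OF A Bc(1)] Bc(2) by simp
  then obtain V lam where V: "unitary_mat n V" and lam: "length lam = n" "sorted (rev lam)"
    and H: "B * A * B = V * real_diag_mat n ((!) lam) * mat_adjoint V"
    using hermitian_spectral_decomposition unfolding psd_mat_def by blast
  note V' = unitary_matD[OF V]
  have "0 \<le> lam ! l" if "l < n" for l
    using unitary_diag_nonneg_of_psd[OF _ V that] \<open>psd_mat n (B * A * B)\<close> H by simp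
  moreover have "mat_adjoint (B * V) * (B' * V) = 1\<^sub>m n" "B' * V * mat_adjoint (B * V) = 1\<^sub>m n"
  proof -
    have "B * (B' * V) = V" using Bc B' V' BB' by (simp flip: assoc_mult_mat)
    thus "mat_adjoint (B * V) * (B' * V) = 1\<^sub>m n" "B' * V * mat_adjoint (B * V) = 1\<^sub>m n"
      using Bc B' BB' V' unitary_mat_cancel[OF V, where k = n]
      by (simp_all add: mat_adjoint_mult[of _ n n _ n] assoc_mult_mat[of _ n n _ n _ n]
          mult_carrier_mat[of _ n n _ n])
  qed
  moreover have "Z * (B' * V) = B * V"
    unfolding BB[symmetric] using Bc B' BB' V'
    by (simp add: assoc_mult_mat[of _ n n _ n _ n] flip: assoc_mult_mat[of B n n B' n V n])
  moreover have "A * Z = (B' * V) * real_diag_mat n ((!) lam) * mat_adjoint (B * V)"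
  proof -
    have "(B' * V) * real_diag_mat n ((!) lam) * mat_adjoint (B * V) = B' * (B * A * B) * B"
      unfolding H using Bc B' V' by (simp add: mat_adjoint_mult[of _ n n _ n] assoc_mult_mat[of _ n n _ n _ n]
          mult_carrier_mat[of _ n n _ n])
    also have "\<dots> = (B' * B) * A * (B * B)"
      using Bc B' Ac by (simp add: assoc_mult_mat[of _ n n _ n _ n] mult_carrier_mat[of _ n n _ n])
    finally show ?thesis using BB BB' Ac by simp
  qed
  ultimately show ?thesis
    using that[of "B' * V" "B * V" lam] Bc B' V' lam by auto
qed

section \<open>The Kantorovich inequality\<close>

lemma kantorovich_inequality_sum:
  fixes p z :: "nat \<Rightarrow> real"
  assumes p: "\<And>i. i \<in> I \<Longrightarrow> p i \<ge> 0" and z: "\<And>i. i \<in> I \<Longrightarrow> b \<le> z i \<and> z i \<le> a" and b: "0 < b"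
  shows "(\<Sum>i\<in>I. p i) * (\<Sum>i\<in>I. p i * (z i)\<^sup>2) \<le> (a+b)\<^sup>2 / (4*a*b) * (\<Sum>i\<in>I. p i * z i)\<^sup>2"
proof (cases "I = {}")
  case False
  then obtain i where "i \<in> I" by blast
  hence ab: "0 < a" using z b by force
  define S0 where "S0 = (\<Sum>i\<in>I. p i)"
  define S1 where "S1 = (\<Sum>i\<in>I. p i * z i)"
  define S2 where "S2 = (\<Sum>i\<in>I. p i * (z i)\<^sup>2)"
  \<comment> \<open>\<open>(z - b)(a - z) \<ge> 0\<close> bounds the second moment linearly; then AM-GM.\<close>
  have "S2 \<le> (\<Sum>i\<in>I. (a+b) * (p i * z i) - a*b * p i)" unfolding S2_def
  proof (rule sum_mono)
    fix i assume i: "i \<in> I"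
    have "p i * ((z i - b) * (a - z i)) \<ge> 0" using z[OF i] p[OF i] by simp
    thus "p i * (z i)\<^sup>2 \<le> (a+b) * (p i * z i) - a*b * p i"
      by (simp add: power2_eq_square algebra_simps)
  qed
  also have "\<dots> = (a+b) * S1 - a*b*S0" unfolding S0_def S1_def
    by (simp add: sum_subtractf sum_distrib_left)
  finally have S2: "S2 \<le> (a+b) * S1 - a*b*S0" .
  have S0: "S0 \<ge> 0" unfolding S0_def using p by (simp add: sum_nonneg)
  have "S0 * S2 \<le> S0 * ((a+b) * S1 - a*b*S0)" using S2 S0 by (rule mult_left_mono)
  also have "\<dots> \<le> (a+b)\<^sup>2 / (4*a*b) * S1\<^sup>2"
  proof -
    have "0 \<le> ((a+b) * S1 - 2*a*b*S0)\<^sup>2" by simp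
    hence "4*a*b * (S0 * ((a+b) * S1 - a*b*S0)) \<le> (a+b)\<^sup>2 * S1\<^sup>2"
      by (simp add: power2_eq_square algebra_simps)
    thus ?thesis using ab b by (simp add: field_simps)
  qed
  finally show ?thesis unfolding S0_def S1_def S2_def .
qed simp

lemma kantorovich_inequality:
  assumes U: "unitary_mat n U" and z: "\<And>i. i < n \<Longrightarrow> b \<le> z i \<and> z i \<le> a" and b: "0 < b"
    and u: "u \<in> carrier_vec n"
  defines "Z \<equiv> U * real_diag_mat n z * mat_adjoint U"
  shows "sq_norm u * sq_norm (Z *\<^sub>v u) \<le> (a+b)\<^sup>2 / (4*a*b) * (Re (u \<bullet>c (Z *\<^sub>v u)))\<^sup>2"
proof -
  note U' = unitary_matD[OF U]
  have Z: "Z \<in> carrier_mat n n" unfolding Z_def using U' by simp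
  define p where "p i = (cmod ((mat_adjoint U *\<^sub>v u) $ i))\<^sup>2" for i
  have "sq_norm u = (\<Sum>i<n. p i)" unfolding p_def by (rule sq_norm_unitary[OF U u])
  moreover have "Re (u \<bullet>c (Z *\<^sub>v u)) = (\<Sum>i<n. p i * z i)"
    unfolding Z_def p_def cscalar_prod_unitary_diag[OF U'(1) u] by (simp add: Re_sum mult.commute)
  moreover have "sq_norm (Z *\<^sub>v u) = (\<Sum>i<n. p i * (z i)\<^sup>2)"
  proof -
    have "sq_norm (Z *\<^sub>v u) = Re (u \<bullet>c (mat_adjoint Z *\<^sub>v (Z *\<^sub>v u)))"
      unfolding sq_norm_def using cscalar_prod_mat_adjoint[OF Z u, of "Z *\<^sub>v u"] Z u by simp
    also have "mat_adjoint Z *\<^sub>v (Z *\<^sub>v u) = (U * real_diag_mat n (\<lambda>i. z i * z i) * mat_adjoint U) *\<^sub>v u"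
      using hermitian_unitary_diag[OF U'(1), of z] unitary_diag_mult[OF U, of z z] Z u
      unfolding Z_def hermitian_mat_def by (simp flip: assoc_mult_mat_vec[of _ n n _ n])
    finally show ?thesis
      unfolding p_def cscalar_prod_unitary_diag[OF U'(1) u] by (simp add: Re_sum power2_eq_square mult.commute)
  qed
  ultimately show ?thesis
    using kantorovich_inequality_sum[where I = "{..<n}" and p = p and z = z and a = a and b = b] z b by (simp add: p_def)
qed

lemma pd_mat_kantorovich:
  assumes Z: "pd_mat n Z" and n: "0 < n"
  defines "a \<equiv> hd (Eig Z)" and "b \<equiv> last (Eig Z)"
  shows "0 < b" "b \<le> a"
    "\<And>u. u \<in> carrier_vec n \<Longrightarrow>
      sq_norm u * sq_norm (Z *\<^sub>v u) \<le> ((a + b) / (2 * sqrt (a * b)))\<^sup>2 * (Re (u \<bullet>c (Z *\<^sub>v u)))\<^sup>2"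
proof -
  obtain U zs where U: "unitary_mat n U" and zs: "length zs = n" "sorted (rev zs)"
    and pos: "\<And>i. i < n \<Longrightarrow> 0 < zs ! i"
    and Zd: "Z = U * real_diag_mat n ((!) zs) * mat_adjoint U" and Eig: "Eig Z = zs"
    using pd_mat_spectral_decomposition[OF Z] by metis
  have "zs \<noteq> []" using zs n by auto
  hence ab: "a = zs ! 0" "b = zs ! (n - 1)"
    unfolding a_def b_def Eig using zs by (simp_all add: hd_conv_nth last_conv_nth)
  have range: "b \<le> zs ! i \<and> zs ! i \<le> a" if "i < n" for i
    unfolding ab using sorted_rev_nth_mono[OF zs(2)] that zs(1) by auto
  show b: "0 < b" unfolding ab using pos n by simp
  show "b \<le> a" using range[OF n] by simp
  fix u :: "complex vec" assume u: "u \<in> carrier_vec n"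
  have "((a + b) / (2 * sqrt (a * b)))\<^sup>2 = (a + b)\<^sup>2 / (4 * a * b)"
    using b range[OF n] by (simp add: power_divide power_mult_distrib)
  thus "sq_norm u * sq_norm (Z *\<^sub>v u) \<le> ((a + b) / (2 * sqrt (a * b)))\<^sup>2 * (Re (u \<bullet>c (Z *\<^sub>v u)))\<^sup>2"
    unfolding Zd using kantorovich_inequality[OF U range b u] by simp
qed

lemma kantorovich_col_bound:
  assumes Z: "Z \<in> carrier_mat n n" and P: "P \<in> carrier_mat n n" and Q: "Q \<in> carrier_mat n n"
    and ZP: "Z * P = Q" and QP: "mat_adjoint Q * P = 1\<^sub>m n"
    and kant: "\<And>u. u \<in> carrier_vec n \<Longrightarrow> sq_norm u * sq_norm (Z *\<^sub>v u) \<le> F\<^sup>2 * (Re (u \<bullet>c (Z *\<^sub>v u)))\<^sup>2"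
    and l: "l < n"
  shows "sq_norm (col P l) * sq_norm (col Q l) \<le> F\<^sup>2"
proof -
  have p: "col P l \<in> carrier_vec n" using P l by simp
  have Zp: "Z *\<^sub>v col P l = col Q l" using col_mult2[OF Z P l] ZP by simp
  have "col P l \<bullet>c col Q l = 1"
    using index_mat_adjoint_mult_mult[OF Q one_carrier_mat P l l] QP l p
      right_mult_one_mat[OF mat_adjoint_carrier[OF Q]] by simp
  thus ?thesis using kant[OF p] unfolding Zp by simp
qed

lemma kantorovich_projection_bound:
  assumes Z: "Z \<in> carrier_mat n n" and P: "P \<in> carrier_mat n n" and Q: "Q \<in> carrier_mat n n"
    and ZP: "Z * P = Q" and QP: "mat_adjoint Q * P = 1\<^sub>m n"
    and kant: "\<And>u. u \<in> carrier_vec n \<Longrightarrow> sq_norm u * sq_norm (Z *\<^sub>v u) \<le> F\<^sup>2 * (Re (u \<bullet>c (Z *\<^sub>v u)))\<^sup>2"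
    and e: "\<And>i. e i = 0 \<or> e i = 1" and w: "w \<in> carrier_vec n"
  shows "sq_norm ((P * real_diag_mat n e * mat_adjoint Q) *\<^sub>v w) \<le> F\<^sup>2 * sq_norm w"
proof -
  \<comment> \<open>With \<open>u = P c\<close> and \<open>Z u = Q c\<close>, both \<open>u \<bullet>c Z u\<close> and \<open>Z u \<bullet>c w\<close> equal \<open>|c|\<^sup>2\<close>.\<close>
  define d where "d = mat_adjoint Q *\<^sub>v w"
  define c where "c = real_diag_mat n e *\<^sub>v d"
  define u where "u = P *\<^sub>v c"
  have d: "d \<in> carrier_vec n" unfolding d_def using Q w by simp
  have c: "c \<in> carrier_vec n" unfolding c_def by (rule mult_mat_vec_carrier[OF real_diag_mat_carrier d])
  have u: "u \<in> carrier_vec n" unfolding u_def using P c by simp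
  have u_eq: "(P * real_diag_mat n e * mat_adjoint Q) *\<^sub>v w = u"
    unfolding u_def c_def d_def using P Q w by (simp add: assoc_mult_mat_vec[of _ n n _ n] mult_carrier_mat[of _ n n _ n])
  have Zu: "Z *\<^sub>v u = Q *\<^sub>v c"
    unfolding u_def ZP[symmetric] using Z P c by simp
  have "mat_adjoint P * Q = 1\<^sub>m n"
    using arg_cong[OF QP, of mat_adjoint] mat_adjoint_mult[OF mat_adjoint_carrier[OF Q] P] by simp
  hence PQc: "mat_adjoint P *\<^sub>v (Q *\<^sub>v c) = c"
    using P Q c by (simp flip: assoc_mult_mat_vec[of _ n n _ n])
  define t where "t = sq_norm c"
  have cd: "c \<bullet>c d = complex_of_real t"
  proof -
    have "c $ i * cnj (d $ i) = c $ i * cnj (c $ i)" if i: "i < n" for i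
    proof -
      have "c $ i = complex_of_real (e i) * d $ i"
        unfolding c_def using d i by (simp del: index_mult_mat_vec)
      thus ?thesis using e[of i] by auto
    qed
    hence "c \<bullet>c d = c \<bullet>c c" unfolding cscalar_prod_sum using c d by (intro sum.cong) auto
    thus ?thesis unfolding t_def cscalar_prod_self .
  qed
  have t1: "u \<bullet>c (Z *\<^sub>v u) = complex_of_real t"
    unfolding Zu unfolding u_def using cscalar_prod_mat_adjoint[OF P c, of "Q *\<^sub>v c"] Q c PQc
    by (simp add: t_def cscalar_prod_self)
  have t2: "(Z *\<^sub>v u) \<bullet>c w = complex_of_real t"
    unfolding Zu using cscalar_prod_mat_adjoint[OF Q c w] cd unfolding d_def by simp
  have kt: "sq_norm u * sq_norm (Z *\<^sub>v u) \<le> F\<^sup>2 * t\<^sup>2" using kant[OF u] t1 by simp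
  have cs: "t\<^sup>2 \<le> sq_norm (Z *\<^sub>v u) * sq_norm w" using cscalar_prod_cauchy_schwarz[of "Z *\<^sub>v u" n w] Z u w t2 by simp
  show ?thesis
  proof (cases "sq_norm (Z *\<^sub>v u) = 0")
    case True
    hence "sq_norm c = 0" using cs sq_norm_nonneg[of w] unfolding t_def by simp
    hence "u = 0\<^sub>v n" unfolding u_def using sq_norm_eq_0_iff[OF c] P by auto
    thus ?thesis unfolding u_eq using sq_norm_nonneg[of w] by (simp add: sq_norm_def)
  next
    case False
    hence pos: "0 < sq_norm (Z *\<^sub>v u)" using sq_norm_nonneg[of "Z *\<^sub>v u"] by simp
    have "sq_norm u * sq_norm (Z *\<^sub>v u) \<le> (F\<^sup>2 * sq_norm w) * sq_norm (Z *\<^sub>v u)"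
      using kt mult_left_mono[OF cs, of "F\<^sup>2"] by (simp add: ac_simps)
    thus ?thesis using pos unfolding u_eq by simp
  qed
qed

section \<open>Singular values of a matrix with a biorthogonal eigenbasis\<close>

definition mat_trace :: "complex mat \<Rightarrow> complex" where
  "mat_trace A = (\<Sum>i<dim_row A. A $$ (i,i))"

lemma mat_trace_mult_comm:
  assumes A: "A \<in> carrier_mat n m" and B: "B \<in> carrier_mat m n"
  shows "mat_trace (A * B) = mat_trace (B * A)"
proof -
  have "mat_trace (A * B) = (\<Sum>i<n. \<Sum>k<m. A $$ (i,k) * B $$ (k,i))"
    unfolding mat_trace_def using A B by (auto simp: scalar_prod_def atLeast0LessThan intro!: sum.cong)
  also have "\<dots> = (\<Sum>k<m. \<Sum>i<n. B $$ (k,i) * A $$ (i,k))"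
    by (subst sum.swap) (simp add: mult.commute)
  also have "\<dots> = mat_trace (B * A)"
    unfolding mat_trace_def using A B by (auto simp: scalar_prod_def atLeast0LessThan intro!: sum.cong)
  finally show ?thesis .
qed

lemma mat_trace_mult_diag_factorization:
  assumes Y: "Y \<in> carrier_mat n n" and P: "P \<in> carrier_mat n n" and Q: "Q \<in> carrier_mat n n"
  shows "mat_trace (Y * (P * real_diag_mat n f * mat_adjoint Q)) =
    (\<Sum>l<n. complex_of_real (f l) * ((Y *\<^sub>v col P l) \<bullet>c col Q l))"
proof -
  have "Y * (P * real_diag_mat n f * mat_adjoint Q) = (Y * P * real_diag_mat n f) * mat_adjoint Q"
    using Y P Q by (simp add: assoc_mult_mat[of _ n n _ n _ n] mult_carrier_mat[of _ n n _ n])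
  hence "mat_trace (Y * (P * real_diag_mat n f * mat_adjoint Q)) =
    mat_trace ((mat_adjoint Q * Y * P) * real_diag_mat n f)"
    using Y P Q mat_trace_mult_comm[of "Y * P * real_diag_mat n f" n n "mat_adjoint Q"]
    by (simp add: assoc_mult_mat[of _ n n _ n _ n] mult_carrier_mat[of _ n n _ n])
  also have "\<dots> = (\<Sum>l<n. (mat_adjoint Q * Y * P) $$ (l,l) * complex_of_real (f l))"
    unfolding real_diag_mat_def mat_trace_def
    using mat_diag_mult_right[of "mat_adjoint Q * Y * P" n n] Y P Q
    by (simp add: mult_carrier_mat[of _ n n _ n])
  also have "\<dots> = (\<Sum>l<n. complex_of_real (f l) * ((Y *\<^sub>v col P l) \<bullet>c col Q l))"
    using index_mat_adjoint_mult_mult[OF Q Y P] by (simp add: mult.commute)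
  finally show ?thesis .
qed

lemma mat_trace_unitary_diag:
  assumes "unitary_mat n W"
  shows "mat_trace (W * real_diag_mat n f * mat_adjoint W) = (\<Sum>j<n. complex_of_real (f j))"
  using mat_trace_mult_diag_factorization[OF one_carrier_mat, of W n W f] unitary_matD[OF assms]
    unitary_mat_col_cscalar_prod[OF assms]
  by (simp add: one_mult_mat_vec[of _ n])

lemma summation_by_parts:
  fixes lam e :: "nat \<Rightarrow> real"
  shows "(\<Sum>l<m. lam l * e l) = (\<Sum>p<m. (lam p - lam (Suc p)) * (\<Sum>l<Suc p. e l)) + lam m * (\<Sum>l<m. e l)"
  by (induction m) (simp_all add: algebra_simps)

lemma sum_decreasing_weights_nonneg:
  fixes lam e :: "nat \<Rightarrow> real"
  assumes mono: "\<And>i j. i \<le> j \<Longrightarrow> j < n \<Longrightarrow> lam j \<le> lam i" and nonneg: "\<And>i. i < n \<Longrightarrow> 0 \<le> lam i"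
    and partial: "\<And>p. p \<le> n \<Longrightarrow> 0 \<le> (\<Sum>l<p. e l)"
  shows "0 \<le> (\<Sum>l<n. lam l * e l)"
proof -
  define lam' where "lam' i = (if i < n then lam i else 0)" for i
  have "(\<Sum>l<n. lam l * e l) = (\<Sum>l<n. lam' l * e l)" unfolding lam'_def by simp
  also have "\<dots> = (\<Sum>p<n. (lam' p - lam' (Suc p)) * (\<Sum>l<Suc p. e l))"
    using summation_by_parts[of lam' e n] by (simp add: lam'_def)
  also have "\<dots> \<ge> 0"
  proof (rule sum_nonneg)
    fix p assume p: "p \<in> {..<n}"
    have "lam' (Suc p) \<le> lam' p" unfolding lam'_def using p mono nonneg by auto
    thus "0 \<le> (lam' p - lam' (Suc p)) * (\<Sum>l<Suc p. e l)" using partial[of "Suc p"] p by simp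
  qed
  finally show ?thesis .
qed

lemma sum_decreasing_weights_le:
  fixes lam r :: "nat \<Rightarrow> real"
  assumes mono: "\<And>i j. i \<le> j \<Longrightarrow> j < n \<Longrightarrow> lam j \<le> lam i" and nonneg: "\<And>i. i < n \<Longrightarrow> 0 \<le> lam i"
    and partial: "\<And>p. p \<le> n \<Longrightarrow> (\<Sum>l<p. r l) \<le> F * min p k" and k: "k \<le> n"
  shows "(\<Sum>l<n. lam l * r l) \<le> F * (\<Sum>l<k. lam l)"
proof -
  define d where "d l = (if l < k then F else 0)" for l
  have "(\<Sum>l<p. d l) = F * min (real p) (real k)" for p
  proof -
    have "(\<Sum>l<p. d l) = (\<Sum>l\<in>{..<min p k}. F)" unfolding d_def
      by (rule sum.mono_neutral_cong_right) auto
    thus ?thesis by (simp add: min_def)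
  qed
  hence "0 \<le> (\<Sum>l<n. lam l * (d l - r l))"
    using partial by (intro sum_decreasing_weights_nonneg[OF mono nonneg]) (auto simp: sum_subtractf)
  hence "(\<Sum>l<n. lam l * r l) \<le> (\<Sum>l<n. lam l * d l)" by (simp add: algebra_simps sum_subtractf)
  also have "(\<Sum>l<n. lam l * d l) = (\<Sum>l<k. F * lam l)" unfolding d_def
    using k by (intro sum.mono_neutral_cong_right) auto
  finally show ?thesis by (simp add: sum_distrib_left)
qed

lemma re_mat_trace_biorthogonal_le:
  fixes lam :: "real list"
  assumes P: "P \<in> carrier_mat n n" and Q: "Q \<in> carrier_mat n n"
    and X: "X = P * real_diag_mat n ((!) lam) * mat_adjoint Q"
    and lam: "length lam = n" "sorted (rev lam)" "\<And>l. l < n \<Longrightarrow> 0 \<le> lam ! l"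
    and G: "hermitian_mat n G"
    and contraction: "\<And>y. y \<in> carrier_vec n \<Longrightarrow> sq_norm (X *\<^sub>v (G *\<^sub>v y)) \<le> sq_norm y"
    and col_bound: "\<And>l. l < n \<Longrightarrow> sq_norm (col P l) * sq_norm (col Q l) \<le> F\<^sup>2" and F: "0 \<le> F"
    and partial: "\<And>p. p \<le> n \<Longrightarrow>
      cmod (mat_trace (G * mat_adjoint X * (P * real_diag_mat n (\<lambda>l. if l < p then 1 else 0) * mat_adjoint Q)))
        \<le> F * k"
    and k: "k \<le> n"
  shows "Re (mat_trace (G * mat_adjoint X * X)) \<le> F * (\<Sum>l<k. lam ! l)"
proof -
  have X': "X \<in> carrier_mat n n" unfolding X using P Q by (simp add: mult_carrier_mat[of _ n n _ n])
  have G': "G \<in> carrier_mat n n" "mat_adjoint G = G" using G unfolding hermitian_mat_def by auto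
  define Y where "Y = G * mat_adjoint X"
  have Y: "Y \<in> carrier_mat n n" unfolding Y_def using G' X' by simp
  define c where "c l = (Y *\<^sub>v col P l) \<bullet>c col Q l" for l
  have trace: "mat_trace (Y * X) = (\<Sum>l<n. complex_of_real (lam ! l) * c l)"
    unfolding c_def X by (rule mat_trace_mult_diag_factorization[OF Y P Q])
  have c_bound: "cmod (c l) \<le> F" if l: "l < n" for l
  proof -
    have p: "col P l \<in> carrier_vec n" and q: "col Q l \<in> carrier_vec n" using P Q l by auto
    have "c l = (G *\<^sub>v (mat_adjoint X *\<^sub>v col P l)) \<bullet>c col Q l"
      unfolding c_def Y_def using G' X' p by (simp add: assoc_mult_mat_vec[of _ n n _ n])
    also have "\<dots> = (mat_adjoint X *\<^sub>v col P l) \<bullet>c (G *\<^sub>v col Q l)"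
      using cscalar_prod_mat_adjoint[OF G'(1) _ q, of "mat_adjoint X *\<^sub>v col P l"] G' X' p by simp
    also have "\<dots> = col P l \<bullet>c (X *\<^sub>v (G *\<^sub>v col Q l))"
      using cscalar_prod_mat_adjoint[OF mat_adjoint_carrier[OF X'] p, of "G *\<^sub>v col Q l"] G' q by simp
    finally have "(cmod (c l))\<^sup>2 \<le> sq_norm (col P l) * sq_norm (X *\<^sub>v (G *\<^sub>v col Q l))"
      using cscalar_prod_cauchy_schwarz[OF p, of "X *\<^sub>v (G *\<^sub>v col Q l)"] X' G' q by simp
    also have "\<dots> \<le> sq_norm (col P l) * sq_norm (col Q l)"
      using contraction[OF q] sq_norm_nonneg[of "col P l"] by (rule mult_left_mono)
    also have "\<dots> \<le> F\<^sup>2" by (rule col_bound[OF l])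
    finally show ?thesis using F by (rule power2_le_imp_le)
  qed
  have "(\<Sum>l<p. Re (c l)) \<le> F * min (real p) (real k)" if p: "p \<le> n" for p
  proof -
    have "(\<Sum>l<p. Re (c l)) = Re (\<Sum>l<p. c l)" by (simp add: Re_sum)
    hence "(\<Sum>l<p. Re (c l)) \<le> cmod (\<Sum>l<p. c l)" using complex_Re_le_cmod[of "\<Sum>l<p. c l"] by linarith
    moreover have "cmod (\<Sum>l<p. c l) \<le> F * p"
      using norm_sum[of c "{..<p}"] sum_mono[of "{..<p}" "\<lambda>l. cmod (c l)" "\<lambda>_. F"] c_bound p
      by (simp add: mult.commute)
    moreover have "(\<Sum>l<p. c l) = (\<Sum>l<n. complex_of_real (if l < p then 1 else 0) * c l)"
      using p by (intro sum.mono_neutral_cong_left) auto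
    hence "cmod (\<Sum>l<p. c l) \<le> F * k"
      using partial[OF p] mat_trace_mult_diag_factorization[OF Y P Q, of "\<lambda>l. if l < p then 1 else 0"]
      unfolding c_def Y_def by simp
    ultimately show ?thesis by (simp add: min_def)
  qed
  hence "(\<Sum>l<n. lam ! l * Re (c l)) \<le> F * (\<Sum>l<k. lam ! l)"
    using sorted_rev_nth_mono[OF lam(2)] lam(1,3) k by (intro sum_decreasing_weights_le) auto
  moreover have "Re (mat_trace (Y * X)) = (\<Sum>l<n. lam ! l * Re (c l))"
    unfolding trace by (simp add: Re_sum)
  ultimately show ?thesis unfolding Y_def by simp
qed

lemma sum_list_take_eq_sum: "k \<le> length xs \<Longrightarrow> sum_list (take k xs) = (\<Sum>i<k. xs ! i)"
  by (simp add: sum_list_sum_nth atLeast0LessThan min_def)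

locale gram_diagonalization =
  fixes n :: nat and X W :: "complex mat" and \<mu> :: "real list"
  assumes unitary: "unitary_mat n W" and carrier: "X \<in> carrier_mat n n"
    and gram: "mat_adjoint X * X = W * real_diag_mat n ((!) \<mu>) * mat_adjoint W"
begin

lemma sq_norm_mult_col:
  assumes j: "j < n"
  shows "sq_norm (X *\<^sub>v col W j) = \<mu> ! j"
proof -
  note W = unitary_matD[OF unitary]
  have w: "col W j \<in> carrier_vec n" using W j by simp
  have "col W j \<bullet>c ((mat_adjoint X * X) *\<^sub>v col W j) = complex_of_real (\<mu> ! j)"
    unfolding gram unitary_diag_mult_col[OF unitary j]
    using cscalar_prod_smult_right[OF w w] unitary_mat_col_cscalar_prod[OF unitary j j] by simp
  thus ?thesis using sq_norm_mult_mat_vec[OF carrier w] by simp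
qed

lemma eigenvalue_nonneg: "j < n \<Longrightarrow> 0 \<le> \<mu> ! j"
  using sq_norm_mult_col sq_norm_nonneg by metis

definition test_weight :: "nat \<Rightarrow> nat \<Rightarrow> real" where
  "test_weight k j = (if j < k \<and> 0 < \<mu> ! j then 1 / sqrt (\<mu> ! j) else 0)"

definition test_mat :: "nat \<Rightarrow> complex mat" where
  "test_mat k = W * real_diag_mat n (test_weight k) * mat_adjoint W"

lemma test_mat_carrier: "test_mat k \<in> carrier_mat n n"
  unfolding test_mat_def using unitary_matD[OF unitary] by simp

lemma hermitian_test_mat: "hermitian_mat n (test_mat k)"
  unfolding test_mat_def by (rule hermitian_unitary_diag[OF unitary_matD(1)[OF unitary]])

lemma re_trace_test_mat:
  assumes k: "k \<le> n"
  shows "Re (mat_trace (test_mat k * mat_adjoint X * X)) = (\<Sum>j<k. sqrt (\<mu> ! j))"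
proof -
  have "test_mat k * mat_adjoint X * X = test_mat k * (mat_adjoint X * X)"
    using test_mat_carrier carrier by (simp add: assoc_mult_mat[of _ n n _ n _ n])
  also have "\<dots> = W * real_diag_mat n (\<lambda>j. test_weight k j * \<mu> ! j) * mat_adjoint W"
    unfolding gram test_mat_def by (rule unitary_diag_mult[OF unitary])
  finally have "Re (mat_trace (test_mat k * mat_adjoint X * X)) = (\<Sum>j<n. test_weight k j * \<mu> ! j)"
    by (simp add: mat_trace_unitary_diag[OF unitary] Re_sum)
  also have "\<dots> = (\<Sum>j<n. if j < k then sqrt (\<mu> ! j) else 0)"
  proof (intro sum.cong refl)
    fix j assume "j \<in> {..<n}"
    thus "test_weight k j * \<mu> ! j = (if j < k then sqrt (\<mu> ! j) else 0)"
      using eigenvalue_nonneg[of j] by (auto simp: test_weight_def real_div_sqrt)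
  qed
  also have "\<dots> = (\<Sum>j<k. sqrt (\<mu> ! j))"
    using k by (intro sum.mono_neutral_cong_right) auto
  finally show ?thesis .
qed

lemma test_mat_contraction:
  assumes y: "y \<in> carrier_vec n"
  shows "sq_norm (X *\<^sub>v (test_mat k *\<^sub>v y)) \<le> sq_norm y"
proof -
  note W = unitary_matD[OF unitary]
  define G where "G = test_mat k"
  have G: "G \<in> carrier_mat n n" "mat_adjoint G = G"
    using hermitian_test_mat unfolding G_def hermitian_mat_def by auto
  define h where "h j = test_weight k j * \<mu> ! j * test_weight k j" for j
  have "sq_norm (X *\<^sub>v (G *\<^sub>v y)) = Re ((G *\<^sub>v y) \<bullet>c ((mat_adjoint X * X) *\<^sub>v (G *\<^sub>v y)))"
    using sq_norm_mult_mat_vec[OF carrier] G y by simp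
  also have "(G *\<^sub>v y) \<bullet>c ((mat_adjoint X * X) *\<^sub>v (G *\<^sub>v y)) = y \<bullet>c ((G * (mat_adjoint X * X) * G) *\<^sub>v y)"
    using cscalar_prod_mat_adjoint[OF G(1) y, of "(mat_adjoint X * X) *\<^sub>v (G *\<^sub>v y)"] G carrier y
    by (simp add: assoc_mult_mat_vec[of _ n n _ n] mult_carrier_mat[of _ n n _ n])
  also have "G * (mat_adjoint X * X) * G = W * real_diag_mat n h * mat_adjoint W"
    unfolding G_def test_mat_def gram h_def unitary_diag_mult[OF unitary] ..
  also have "Re (y \<bullet>c ((W * real_diag_mat n h * mat_adjoint W) *\<^sub>v y)) =
    (\<Sum>i<n. h i * (cmod ((mat_adjoint W *\<^sub>v y) $ i))\<^sup>2)"
    unfolding cscalar_prod_unitary_diag[OF W(1) y] by (simp add: Re_sum)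
  also have "\<dots> \<le> (\<Sum>i<n. (cmod ((mat_adjoint W *\<^sub>v y) $ i))\<^sup>2)"
  proof (rule sum_mono)
    fix i
    have "0 \<le> h i" "h i \<le> 1" unfolding h_def test_weight_def by (auto simp: power2_eq_square[symmetric])
    thus "h i * (cmod ((mat_adjoint W *\<^sub>v y) $ i))\<^sup>2 \<le> (cmod ((mat_adjoint W *\<^sub>v y) $ i))\<^sup>2"
      by (simp add: mult_left_le_one_le)
  qed
  also have "\<dots> = sq_norm y" by (rule sq_norm_unitary[OF unitary y, symmetric])
  finally show ?thesis unfolding G_def .
qed

lemma trace_test_mat_bound:
  assumes T: "T \<in> carrier_mat n n" and F: "0 \<le> F"
    and bound: "\<And>w. w \<in> carrier_vec n \<Longrightarrow> sq_norm (T *\<^sub>v w) \<le> F\<^sup>2 * sq_norm w"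
  shows "cmod (mat_trace (test_mat k * mat_adjoint X * T)) \<le> F * k"
proof -
  note W = unitary_matD[OF unitary]
  define t where "t j = ((mat_adjoint X * T) *\<^sub>v col W j) \<bullet>c col W j" for j
  have "mat_trace (test_mat k * mat_adjoint X * T) = mat_trace ((mat_adjoint X * T) * test_mat k)"
    using mat_trace_mult_comm[OF test_mat_carrier, of "mat_adjoint X * T"] T carrier test_mat_carrier
    by (simp add: assoc_mult_mat[of _ n n _ n _ n] mult_carrier_mat[of _ n n _ n])
  also have "\<dots> = (\<Sum>j<n. complex_of_real (test_weight k j) * t j)"
    unfolding test_mat_def t_def using T carrier W
    by (intro mat_trace_mult_diag_factorization) auto
  finally have "cmod (mat_trace (test_mat k * mat_adjoint X * T)) \<le> (\<Sum>j<n. cmod (complex_of_real (test_weight k j) * t j))"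
    by (simp add: norm_sum)
  also have "\<dots> \<le> (\<Sum>j<n. if j < k then F else 0)"
  proof (rule sum_mono)
    fix j assume "j \<in> {..<n}"
    hence j: "j < n" by simp
    show "cmod (complex_of_real (test_weight k j) * t j) \<le> (if j < k then F else 0)"
    proof (cases "j < k \<and> 0 < \<mu> ! j")
      case True
      have w: "col W j \<in> carrier_vec n" using W j by simp
      have "t j = (T *\<^sub>v col W j) \<bullet>c (X *\<^sub>v col W j)"
        unfolding t_def using cscalar_prod_mat_adjoint[OF mat_adjoint_carrier[OF carrier], of "T *\<^sub>v col W j" "col W j"]
          T carrier w by (simp add: assoc_mult_mat_vec[of _ n n _ n])
      hence "(cmod (t j))\<^sup>2 \<le> sq_norm (T *\<^sub>v col W j) * \<mu> ! j"
        using cscalar_prod_cauchy_schwarz[of "T *\<^sub>v col W j" n "X *\<^sub>v col W j"] T carrier w sq_norm_mult_col[OF j] by simp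
      also have "\<dots> \<le> F\<^sup>2 * \<mu> ! j"
        using bound[OF w] unitary_mat_col_cscalar_prod[OF unitary j j] eigenvalue_nonneg[OF j] cscalar_prod_self[of "col W j"]
        by (intro mult_right_mono) auto
      finally have ct: "(cmod (t j))\<^sup>2 \<le> F\<^sup>2 * \<mu> ! j" .
      have "(test_weight k j)\<^sup>2 = 1 / \<mu> ! j"
        using True unfolding test_weight_def by (simp add: power_divide)
      hence "(cmod (complex_of_real (test_weight k j) * t j))\<^sup>2 = (cmod (t j))\<^sup>2 / \<mu> ! j"
        by (simp only: norm_mult norm_of_real power_mult_distrib power2_abs) simp
      also have "\<dots> \<le> F\<^sup>2" using ct True by (simp add: divide_le_eq)
      finally have "cmod (complex_of_real (test_weight k j) * t j) \<le> F"
        using F by (rule power2_le_imp_le)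
      thus ?thesis using True by simp
    qed (auto simp: test_weight_def F)
  qed
  also have "\<dots> = (\<Sum>j<min n k. F)"
    by (rule sum.mono_neutral_cong_right) auto
  also have "\<dots> \<le> F * k"
    using F by (simp add: mult.commute mult_left_mono)
  finally show ?thesis .
qed

end

theorem sum_take_Sing_le_biorthogonal:
  fixes lam :: "real list"
  assumes P: "P \<in> carrier_mat n n" and Q: "Q \<in> carrier_mat n n"
    and X: "X = P * real_diag_mat n ((!) lam) * mat_adjoint Q"
    and lam: "length lam = n" "sorted (rev lam)" "\<And>l. l < n \<Longrightarrow> 0 \<le> lam ! l"
    and col_bound: "\<And>l. l < n \<Longrightarrow> sq_norm (col P l) * sq_norm (col Q l) \<le> F\<^sup>2" and F: "0 \<le> F"
    and proj_bound: "\<And>p w. p \<le> n \<Longrightarrow> w \<in> carrier_vec n \<Longrightarrow>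
      sq_norm ((P * real_diag_mat n (\<lambda>l. if l < p then 1 else 0) * mat_adjoint Q) *\<^sub>v w) \<le> F\<^sup>2 * sq_norm w"
    and k: "k \<le> n"
  shows "sum_list (take k (Sing X)) \<le> F * sum_list (take k lam)"
proof -
  have X': "X \<in> carrier_mat n n" unfolding X using P Q by (simp add: mult_carrier_mat[of _ n n _ n])
  have "hermitian_mat n (mat_adjoint X * 1\<^sub>m n * X)"
    by (rule hermitian_mat_adjoint_mult_mult[OF _ X']) (simp add: hermitian_mat_def)
  then obtain W \<mu> where W: "unitary_mat n W" and \<mu>: "length \<mu> = n" "sorted (rev \<mu>)"
    and gram: "mat_adjoint X * X = W * real_diag_mat n ((!) \<mu>) * mat_adjoint W"
    using hermitian_spectral_decomposition X' by (metis mat_adjoint_carrier right_mult_one_mat)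
  interpret gram_diagonalization n X W \<mu>
    using W X' gram by unfold_locales
  have "sum_list (take k (Sing X)) = (\<Sum>j<k. sqrt (\<mu> ! j))"
    unfolding Sing_def gram Eig_unitary_diag[OF W \<mu>] using k \<mu> by (simp add: sum_list_take_eq_sum)
  also have "\<dots> = Re (mat_trace (test_mat k * mat_adjoint X * X))"
    by (rule re_trace_test_mat[OF k, symmetric])
  also have "\<dots> \<le> F * (\<Sum>l<k. lam ! l)"
    using P Q X lam hermitian_test_mat test_mat_contraction col_bound F k
      trace_test_mat_bound[OF _ F proj_bound] P Q
    by (intro re_mat_trace_biorthogonal_le) (auto simp: mult_carrier_mat[of _ n n _ n])
  also have "\<dots> = F * sum_list (take k lam)" using k lam by (simp add: sum_list_take_eq_sum)
  finally show ?thesis .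
qed

theorem corollary1p3:
  fixes n :: nat and A Z :: "complex mat" and a b :: real
  assumes "psd_mat n A" and "pd_mat n Z"
    and "a = hd (Eig Z)" and "b = last (Eig Z)"
  shows "\<forall>k \<in> {1..n}.
    sum_list (take k (Sing (A * Z))) \<le> (a + b) / (2 * sqrt (a * b)) * sum_list (take k (Eig (A * Z)))"
proof
  fix k assume "k \<in> {1..n}"
  hence k: "k \<le> n" and n: "0 < n" by auto
  define F where "F = (a + b) / (2 * sqrt (a * b))"
  have b: "0 < b" "b \<le> a"
    and kant: "\<And>u. u \<in> carrier_vec n \<Longrightarrow> sq_norm u * sq_norm (Z *\<^sub>v u) \<le> F\<^sup>2 * (Re (u \<bullet>c (Z *\<^sub>v u)))\<^sup>2"
    using pd_mat_kantorovich[OF assms(2) n] unfolding assms(3,4) F_def by auto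
  have F: "0 \<le> F" unfolding F_def using b by simp
  have Z: "Z \<in> carrier_mat n n" using assms(2) unfolding pd_mat_def hermitian_mat_def by simp
  obtain P Q lam where P: "P \<in> carrier_mat n n" and Q: "Q \<in> carrier_mat n n"
    and QP: "mat_adjoint Q * P = 1\<^sub>m n" and PQ: "P * mat_adjoint Q = 1\<^sub>m n" and ZP: "Z * P = Q"
    and lam: "length lam = n" "sorted (rev lam)" "\<And>l. l < n \<Longrightarrow> 0 \<le> lam ! l"
    and AZ: "A * Z = P * real_diag_mat n ((!) lam) * mat_adjoint Q"
    using psd_mult_pd_eigen_factorization[OF assms(1,2)] by blast
  have "Eig (A * Z) = lam"
    using P Q PQ QP AZ lam by (intro Eig_diagonalizable[of _ n P "mat_adjoint Q"]) auto
  moreover have "sum_list (take k (Sing (A * Z))) \<le> F * sum_list (take k lam)"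
    using kantorovich_col_bound[OF Z P Q ZP QP kant] F
      kantorovich_projection_bound[OF Z P Q ZP QP kant] k
    by (intro sum_take_Sing_le_biorthogonal[OF P Q AZ lam]) auto
  ultimately show "sum_list (take k (Sing (A * Z))) \<le> F * sum_list (take k (Eig (A * Z)))" by simp
qed

end
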